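(* In the hierarchical partition construction described in the context, let $v,v^*\in V$ be distinct points and let $j$ be a level such that $\mathcal S_{j+1}$ exists. Let $v\in S_1\in\mathcal S_j$, $v\in S_2\in\mathcal S_{j+1}$, $v^*\in S_1^*\in\mathcal S_j$, $v^*\in S_2^*\in\mathcal S_{j+1}$, and suppose that $S_2$ knows $S_2^*$ (at level $j+1$) but $S_1$ does not know $S_1^*$ (at level $j$). Then $$r_j\le d(v,v^* )<\Big(1+\frac{4\tau 2^{-\eta}}{\tau-1}\Big)\tau r_j .$$ In particular, for $\tau=2$ and $\eta=2$, $r_j\le d(v,v^* )\le 6r_j$.
   Context: Let $(V,d)$ be a finite metric space with $|V|\ge 2$ which is doubling with constant $\lambda$: for every $v\in V$ and $r>0$ the open ball $B_{2r}(v)=\{u:d(u,v)<2r\}$ is contained in the union of at most $\lambda$ open balls $B_r(w)$, $w\in V$. Fix an integer $\eta\ge2$ and a real $\tau$ with $1+\frac{1}{2^{\eta-1}-1}\le\tau\le 2^{\eta}$. For $L\subseteq V$ and $r>0$, a greedy partition of $L$ with parameter $r$ is obtained by: set $L_0=L$; while $L_i\ne\emptyset$ choose any $v_i\in L_i$, let $P_i=\{u\in L_i: d(u,v_i)<2^{-\eta-1}r\}$ with leader $v_i$, and set $L_{i+1}=L_i\setminus P_i$. Hierarchical partition construction: choose $r_0$ with $0<r_0<\min_{u\ne v}d(u,v)$ and put $r_j=\tau^j r_0$. Let $\mathcal S_0=\{\{v\}:v\in V\}$, the leader of $\{v\}$ being $v$. While $\mathcal S_j$ has more than one element: let $L_j$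 be the set of leaders of the sets in $\mathcal S_j$, let $\mathcal S'_{j+1}$ be a greedy partition of $L_j$ with parameter $2r_{j+1}$, and let $\mathcal S_{j+1}$ consist, for each $P\in\mathcal S'_{j+1}$, of the set $\bigcup\{S\in\mathcal S_j:\mathrm{leader}(S)\in P\}$, whose leader is defined to be the leader of $P$. Each $\mathcal S_j$ is a partition of $V$. For $S,S'\in\mathcal S_j$, $S$ knows $S'$ (at level $j$) if there are $v\in S$, $u\in S'$ with $d(v,u)<r_j$. *)

theory Defs
  imports Main "HOL-Library.Disjoint_Sets" Complex_Main
begin

definition metric_on :: "'a set \<Rightarrow> ('a \<Rightarrow> 'a \<Rightarrow> real) \<Rightarrow> bool" where
  "metric_on V d \<longleftrightarrow>
     (\<forall>u\<in>V. \<forall>v\<in>V. 0 \<le> d u v \<and> (d u v = 0 \<longleftrightarrow> u = v) \<and> d u v = d v u) \<and>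
     (\<forall>u\<in>V. \<forall>v\<in>V. \<forall>w\<in>V. d u w \<le> d u v + d v w)"

definition oball :: "'a set \<Rightarrow> ('a \<Rightarrow> 'a \<Rightarrow> real) \<Rightarrow> 'a \<Rightarrow> real \<Rightarrow> 'a set" where
  "oball V d v r = {u \<in> V. d u v < r}"

definition doubling :: "'a set \<Rightarrow> ('a \<Rightarrow> 'a \<Rightarrow> real) \<Rightarrow> nat \<Rightarrow> bool" where
  "doubling V d lam \<longleftrightarrow>
     (\<forall>v\<in>V. \<forall>r>0. \<exists>W. W \<subseteq> V \<and> finite W \<and> card W \<le> lam \<and>
         oball V d v (2 * r) \<subseteq> (\<Union>w\<in>W. oball V d w r))"

text \<open>A run of the greedy partition of L with parameter r, recorded as the list of
  (leader, part) pairs in the order they were chosen.\<close>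
fun greedy_partition ::
  "('a \<Rightarrow> 'a \<Rightarrow> real) \<Rightarrow> nat \<Rightarrow> 'a set \<Rightarrow> real \<Rightarrow> ('a \<times> 'a set) list \<Rightarrow> bool" where
  "greedy_partition d eta L r [] \<longleftrightarrow> L = {}"
| "greedy_partition d eta L r ((v, P) # rest) \<longleftrightarrow>
     L \<noteq> {} \<and> v \<in> L \<and> P = {u \<in> L. d u v < 2 powr (- real eta - 1) * r} \<and>
     greedy_partition d eta (L - P) r rest"

text \<open>A run of the hierarchical partition construction: S j is the set of
  (leader, set) pairs of level j, for j = 0..m, where m is the final level
  (the first level with only one set).  The radii are r_j = tau^j * r0.\<close>
definition hier_partition ::
  "'a set \<Rightarrow> ('a \<Rightarrow> 'a \<Rightarrow> real) \<Rightarrow> nat \<Rightarrow> real \<Rightarrow> real \<Rightarrow>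
   (nat \<Rightarrow> ('a \<times> 'a set) set) \<Rightarrow> nat \<Rightarrow> bool" where
  "hier_partition V d eta tau r0 S m \<longleftrightarrow>
     S 0 = {(v, {v}) | v. v \<in> V} \<and>
     (\<forall>j<m. card (S j) > 1 \<and>
        (\<exists>Ps. greedy_partition d eta (fst ` S j) (2 * (tau ^ (j + 1) * r0)) Ps \<and>
              S (j + 1) = {(w, \<Union>{T. \<exists>x. (x, T) \<in> S j \<and> x \<in> P}) | w P. (w, P) \<in> set Ps})) \<and>
     card (S m) = 1"

definition knows :: "('a \<Rightarrow> 'a \<Rightarrow> real) \<Rightarrow> real \<Rightarrow> 'a set \<Rightarrow> 'a set \<Rightarrow> bool" where
  "knows d rj A B \<longleftrightarrow> (\<exists>v\<in>A. \<exists>u\<in>B. d v u < rj)"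

end

theory Submission
  imports Defs
begin

(* Every set of level j of the hierarchical partition lies within
   distance  2^-eta * r0 * (tau + tau^2 + ... + tau^j)  of its leader: a set of level
   j+1 is a union of level-j sets whose leaders are within  2^-eta * r_{j+1}  of the new
   leader (greedy partition with parameter 2 r_{j+1}), so the radius grows by that much.
   The lower bound d v vs >= r_j is immediate from "S1 does not know S1s".  For the
   upper bound, S2 knows S2s, so some a in S2 and b in S2s have d a b < r_{j+1}; the path
   v -> l2 -> a -> b -> l2s -> vs then gives  d v vs < 4 R_{j+1} + r_{j+1}, and summing
   the geometric series bounds R_{j+1} by  2^-eta * r0 * tau^(j+2) / (tau - 1). *)

lemma metric_on_triangle:
  assumes "metric_on V d" "x \<in> V" "y \<in> V" "z \<in> V"
  shows "d x z \<le> d x y + d y z"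
  using assms unfolding metric_on_def by blast

lemma metric_on_sym:
  assumes "metric_on V d" "x \<in> V" "y \<in> V"
  shows "d x y = d y x"
  using assms unfolding metric_on_def by blast

lemma metric_on_self:
  assumes "metric_on V d" "x \<in> V"
  shows "d x x = 0"
  using assms unfolding metric_on_def by blast

lemma close_clusters_distance:
  assumes M: "metric_on V d"
    and "l \<in> V" "A \<subseteq> V" "\<forall>u\<in>A. d u l \<le> R"
    and "l' \<in> V" "B \<subseteq> V" "\<forall>u\<in>B. d u l' \<le> R"
    and "knows d rho A B" and "v \<in> A" "w \<in> B"
  shows "d v w < 4 * R + rho"
proof -
  obtain a b where ab: "a \<in> A" "b \<in> B" "d a b < rho"
    using assms(8) unfolding knows_def by blast
  have V: "v \<in> V" "w \<in> V" "a \<in> V" "b \<in> V" using assms ab by auto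
  have "d v w \<le> d v l + d l w" using metric_on_triangle[OF M] V assms(2) by blast
  also have "d l w \<le> d l a + d a w" using metric_on_triangle[OF M] V assms(2) by blast
  also have "d a w \<le> d a b + d b w" using metric_on_triangle[OF M] V by blast
  also have "d b w \<le> d b l' + d l' w" using metric_on_triangle[OF M] V assms(5) by blast
  finally have "d v w \<le> d v l + d l a + d a b + d b l' + d l' w" by simp
  moreover have "d l a = d a l" "d l' w = d w l'"
    using metric_on_sym[OF M] V assms(2,5) by auto
  moreover have "d v l \<le> R" "d a l \<le> R" "d b l' \<le> R" "d w l' \<le> R"
    using assms(4,7,9,10) ab by auto
  ultimately show ?thesis using ab by linarith
qed

lemma greedy_partition_part:
  assumes "greedy_partition d eta L r Ps" "(w, P) \<in> set Ps"
  shows "w \<in> L \<and> P \<subseteq> {u \<in> L. d u w < 2 powr (- real eta - 1) * r}"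
  using assms
proof (induction Ps arbitrary: L)
  case Nil
  then show ?case by simp
next
  case (Cons a rest)
  obtain x Q where a: "a = (x, Q)" by force
  show ?case
  proof (cases "(w, P) = a")
    case True
    then show ?thesis using Cons.prems a by auto
  next
    case False
    then have "(w, P) \<in> set rest" using Cons.prems by auto
    moreover have "greedy_partition d eta (L - Q) r rest" using Cons.prems a by auto
    ultimately show ?thesis using Cons.IH by blast
  qed
qed

(* Bound on the distance from any point of a level-j set to its leader. *)
definition cluster_radius :: "nat \<Rightarrow> real \<Rightarrow> real \<Rightarrow> nat \<Rightarrow> real" where
  "cluster_radius eta tau r0 j = 2 powr (- real eta) * r0 * (\<Sum>i<j. tau ^ Suc i)"

(* One level adds the greedy radius 2^(-eta-1) * 2 r_{j+1} = 2^-eta r_{j+1}. *)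
lemma cluster_radius_Suc:
  "cluster_radius eta tau r0 (Suc j) =
     cluster_radius eta tau r0 j + 2 powr (- real eta - 1) * (2 * (tau ^ (j + 1) * r0))"
proof -
  have "(2::real) powr (- real eta - 1) * 2 = 2 powr (- real eta)"
    using powr_add[of "2::real" "- real eta - 1" 1] by simp
  then show ?thesis unfolding cluster_radius_def by (simp add: algebra_simps)
qed

lemma hier_partition_radius:
  assumes H: "hier_partition V d eta tau r0 S m" and M: "metric_on V d" and "j \<le> m"
  shows "\<forall>(l, T)\<in>S j. l \<in> V \<and> T \<subseteq> V \<and> (\<forall>u\<in>T. d u l \<le> cluster_radius eta tau r0 j)"
  using assms(3)
proof (induction j)
  case 0
  have "S 0 = {(v, {v}) | v. v \<in> V}" using H unfolding hier_partition_def by blast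
  then show ?case using metric_on_self[OF M] by (auto simp: cluster_radius_def)
next
  case (Suc j)
  let ?R = "cluster_radius eta tau r0 j"
  have IH: "\<forall>(l, T)\<in>S j. l \<in> V \<and> T \<subseteq> V \<and> (\<forall>u\<in>T. d u l \<le> ?R)" using Suc by simp
  obtain Ps where G: "greedy_partition d eta (fst ` S j) (2 * (tau ^ (j + 1) * r0)) Ps"
    and SJ: "S (j + 1) = {(w, \<Union>{T. \<exists>x. (x, T) \<in> S j \<and> x \<in> P}) | w P. (w, P) \<in> set Ps}"
    using H Suc.prems unfolding hier_partition_def by (meson Suc_le_lessD)
  show ?case
  proof clarify
    fix w U assume "(w, U) \<in> S (Suc j)"
    then obtain P where wP: "(w, P) \<in> set Ps"
      and U: "U = \<Union>{T. \<exists>x. (x, T) \<in> S j \<and> x \<in> P}"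
      using SJ by auto
    note part = greedy_partition_part[OF G wP]
    have wV: "w \<in> V" using part IH by auto
    have UV: "U \<subseteq> V" using U IH by blast
    have "d u w \<le> cluster_radius eta tau r0 (Suc j)" if "u \<in> U" for u
    proof -
      obtain x T where xT: "(x, T) \<in> S j" "x \<in> P" "u \<in> T" using U \<open>u \<in> U\<close> by auto
      have xV: "x \<in> V" and uV: "u \<in> V" and dux: "d u x \<le> ?R" using IH xT by auto
      have dxw: "d x w < 2 powr (- real eta - 1) * (2 * (tau ^ (j + 1) * r0))"
        using part xT by auto
      have "d u w \<le> d u x + d x w" using metric_on_triangle[OF M uV xV wV] .
      then show ?thesis using dux dxw cluster_radius_Suc[of eta tau r0 j] by linarith
    qed
    then show "w \<in> V \<and> U \<subseteq> V \<and> (\<forall>u\<in>U. d u w \<le> cluster_radius eta tau r0 (Suc j))"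
      using wV UV by blast
  qed
qed

lemma geometric_sum_less:
  fixes t :: real
  assumes "1 < t"
  shows "(\<Sum>i<n. t ^ Suc i) < t ^ Suc n / (t - 1)"
proof -
  have "(\<Sum>i<n. t ^ Suc i) * (t - 1) = t ^ Suc n - t"
    by (induction n) (auto simp: algebra_simps)
  also have "\<dots> < t ^ Suc n" using assms by simp
  finally show ?thesis using assms by (simp add: field_simps)
qed

lemma cluster_radius_less:
  assumes "1 < tau" "0 < r0"
  shows "cluster_radius eta tau r0 (j + 1) < 2 powr (- real eta) * r0 * (tau ^ (j + 2) / (tau - 1))"
  unfolding cluster_radius_def
  using geometric_sum_less[OF assms(1), of "j + 1"] assms(2)
  by (intro mult_strict_left_mono) auto

lemma tau_gt_1:
  fixes tau :: real
  assumes "eta \<ge> 2" "1 + 1 / (2 ^ (eta - 1) - 1) \<le> tau"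
  shows "1 < tau"
proof -
  have "(2::real) ^ 1 \<le> 2 ^ (eta - 1)" by (rule power_increasing) (use assms(1) in auto)
  then have "0 < 1 / ((2::real) ^ (eta - 1) - 1)" by simp
  then show ?thesis using assms(2) by linarith
qed

theorem lemma6:
  fixes V :: "'a set" and d :: "'a \<Rightarrow> 'a \<Rightarrow> real" and lam :: nat
    and eta :: nat and tau r0 :: real
    and S :: "nat \<Rightarrow> ('a \<times> 'a set) set" and m j :: nat
    and v vs :: 'a and S1 S2 S1s S2s :: "'a set" and l1 l2 l1s l2s :: 'a
  assumes "finite V" and "card V \<ge> 2"
    and "metric_on V d" and "doubling V d lam"
    and "eta \<ge> 2"
    and "1 + 1 / (2 ^ (eta - 1) - 1) \<le> tau" and "tau \<le> 2 ^ eta"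
    and "0 < r0" and "\<forall>u\<in>V. \<forall>w\<in>V. u \<noteq> w \<longrightarrow> r0 < d u w"
    and "hier_partition V d eta tau r0 S m"
    and "j + 1 \<le> m"
    and "v \<in> V" and "vs \<in> V" and "v \<noteq> vs"
    and "(l1, S1) \<in> S j" and "v \<in> S1"
    and "(l2, S2) \<in> S (j + 1)" and "v \<in> S2"
    and "(l1s, S1s) \<in> S j" and "vs \<in> S1s"
    and "(l2s, S2s) \<in> S (j + 1)" and "vs \<in> S2s"
    and "knows d (tau ^ (j + 1) * r0) S2 S2s"
    and "\<not> knows d (tau ^ j * r0) S1 S1s"
  shows "tau ^ j * r0 \<le> d v vs \<and>
         d v vs < (1 + 4 * tau * 2 powr (- real eta) / (tau - 1)) * tau * (tau ^ j * r0) \<and>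
         (tau = 2 \<and> eta = 2 \<longrightarrow> d v vs \<le> 6 * (tau ^ j * r0))"
proof -
  have t1: "1 < tau" using tau_gt_1 assms(5,6) .
  have low: "tau ^ j * r0 \<le> d v vs"
    using assms(16,20,24) unfolding knows_def by force
  define c where "c = (2::real) powr (- real eta)"
  define R where "R = cluster_radius eta tau r0 (j + 1)"
  have radius: "\<forall>(l, T)\<in>S (j + 1). l \<in> V \<and> T \<subseteq> V \<and> (\<forall>u\<in>T. d u l \<le> R)"
    using hier_partition_radius[OF assms(10,3,11)] unfolding R_def .
  have "d v vs < 4 * R + tau ^ (j + 1) * r0"
    using close_clusters_distance[OF assms(3) _ _ _ _ _ _ assms(23,18,22)]
      radius assms(17,21) by fastforce
  also have "\<dots> < 4 * (c * r0 * (tau ^ (j + 2) / (tau - 1))) + tau ^ (j + 1) * r0"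
    using cluster_radius_less[OF t1 assms(8), of eta j] unfolding R_def c_def by linarith
  also have "\<dots> = (1 + 4 * tau * c / (tau - 1)) * tau * (tau ^ j * r0)"
    using t1 by (simp add: field_simps)
  finally have up: "d v vs < (1 + 4 * tau * c / (tau - 1)) * tau * (tau ^ j * r0)" .
  moreover have "(1 + 4 * tau * c / (tau - 1)) * tau = 6" if "tau = 2" "eta = 2"
    using that unfolding c_def by (simp add: powr_minus)
  ultimately show ?thesis using low unfolding c_def by (metis less_imp_le mult.assoc)
qed

end
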